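(* (i) The map $m\mapsto\dfrac{N(m,m)}{G(m)D(m,m)}$ is decreasing on $(0,\overline x]$. (ii) For every $m\in(0,\overline x]$, the map $x\mapsto\dfrac{N(x,m)}{G(x)D(x,m)}$ is decreasing on $[m,\eta(m)]$.
   Context: $\mathcal I=(\alpha,\infty)$, $-\infty\le\alpha<0$; $\mu,\sigma:\mathcal I\to\mathbb R$ Lipschitz with $\sigma>0$, $\alpha,+\infty$ natural boundaries of $dX_t=\mu(X_t)dt+\sigma(X_t)dB_t$; $r>0$; $U:[0,\infty)\to[0,\infty)$. Assumptions: (a) $\mu,\sigma$ are $C^1$ with Lipschitz derivatives, $\mu(0)>rU(0)$, $\sup_{x\ge0}\mu'(x)<r$; (b) $U$ is nondecreasing, concave, $C^2$ on $[0,\infty)$, and for some $u^*\ge0$: $U'\ge1$ on $[0,u^*]$, $U'=1$ on $[u^*,\infty)$, $\mu U'+\frac12\sigma^2U''-rU>0$ on $[0,u^* )$; (c) $\mu$ is twice differentiable with $\mu''\le0$ on $[0,\infty)$. Notation. $\overline x>0$ is the unique point with $\mu-rU>0$ on $[0,\overline x)$ and $\mu-rU<0$ on $(\overline x,\infty)$. $\psi,\phi$ are the positive increasing and decreasing solutions of $\frac12\sigma^2(x)u''+\mu(x)u'-ru=0$. $D(x,m)=\psi'(x)\phi(m)-\phi'(x)\psi(m)$, $N(x,m)=\phi(x)\psi(m)-\psi(x)\phi(m)+D(x,m)\frac{\mu(x)}{r}-D(x,x)U(m)$, $G(x)=1-\mu'(x)/r$. It is known that for every $m\in[0,\overline x]$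 the equation $N(x,m)=0$ has a unique solution $x=\eta(m)\ge0$, with $\eta(m)\ge m$, $N(x,m)>0$ for $x<\eta(m)$ and $N(x,m)<0$ for $x>\eta(m)$. *)

theory Defs
  imports "HOL-Analysis.Analysis"
begin

definition state_space :: "ereal \<Rightarrow> real set" where
  "state_space \<alpha> = {x. \<alpha> < ereal x}"

text \<open>Scale density (reference point 0) and speed density of dX = mu dt + sigma dB.\<close>
definition scale_dens :: "(real \<Rightarrow> real) \<Rightarrow> (real \<Rightarrow> real) \<Rightarrow> real \<Rightarrow> real" where
  "scale_dens \<mu> \<sigma> x = exp (- (LBINT y=0..x. 2 * \<mu> y / (\<sigma> y)\<^sup>2))"

definition speed_dens :: "(real \<Rightarrow> real) \<Rightarrow> (real \<Rightarrow> real) \<Rightarrow> real \<Rightarrow> real" where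
  "speed_dens \<mu> \<sigma> x = 2 / ((\<sigma> x)\<^sup>2 * scale_dens \<mu> \<sigma> x)"

text \<open>Feller's boundary classification: a boundary is natural iff both Feller integrals
  Sigma and N (double integrals of s(.)m(.) over the two orderings of the triangle between
  the boundary and the reference point 0) are infinite.\<close>
definition natural_left :: "ereal \<Rightarrow> (real \<Rightarrow> real) \<Rightarrow> (real \<Rightarrow> real) \<Rightarrow> bool" where
  "natural_left \<alpha> \<mu> \<sigma> \<longleftrightarrow>
     (\<integral>\<^sup>+ a. \<integral>\<^sup>+ b. indicator {(u,v). \<alpha> < ereal u \<and> u < v \<and> v < 0} (a,b)
          * ennreal (scale_dens \<mu> \<sigma> a * speed_dens \<mu> \<sigma> b) \<partial>lborel \<partial>lborel) = \<infinity> \<and>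
     (\<integral>\<^sup>+ a. \<integral>\<^sup>+ b. indicator {(u,v). \<alpha> < ereal u \<and> u < v \<and> v < 0} (a,b)
          * ennreal (speed_dens \<mu> \<sigma> a * scale_dens \<mu> \<sigma> b) \<partial>lborel \<partial>lborel) = \<infinity>"

definition natural_right :: "(real \<Rightarrow> real) \<Rightarrow> (real \<Rightarrow> real) \<Rightarrow> bool" where
  "natural_right \<mu> \<sigma> \<longleftrightarrow>
     (\<integral>\<^sup>+ a. \<integral>\<^sup>+ b. indicator {(u,v). 0 < u \<and> u < v} (a,b)
          * ennreal (scale_dens \<mu> \<sigma> a * speed_dens \<mu> \<sigma> b) \<partial>lborel \<partial>lborel) = \<infinity> \<and>
     (\<integral>\<^sup>+ a. \<integral>\<^sup>+ b. indicator {(u,v). 0 < u \<and> u < v} (a,b)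
          * ennreal (speed_dens \<mu> \<sigma> a * scale_dens \<mu> \<sigma> b) \<partial>lborel \<partial>lborel) = \<infinity>"

definition Dfun :: "(real \<Rightarrow> real) \<Rightarrow> (real \<Rightarrow> real) \<Rightarrow> real \<Rightarrow> real \<Rightarrow> real" where
  "Dfun \<psi> \<phi> x m = deriv \<psi> x * \<phi> m - deriv \<phi> x * \<psi> m"

definition Nfun :: "(real \<Rightarrow> real) \<Rightarrow> (real \<Rightarrow> real) \<Rightarrow> (real \<Rightarrow> real) \<Rightarrow> real
                    \<Rightarrow> (real \<Rightarrow> real) \<Rightarrow> real \<Rightarrow> real \<Rightarrow> real" where
  "Nfun \<psi> \<phi> \<mu> r U x m = \<phi> x * \<psi> m - \<psi> x * \<phi> m + Dfun \<psi> \<phi> x m * (\<mu> x / r)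
                         - Dfun \<psi> \<phi> x x * U m"

definition Gfun :: "(real \<Rightarrow> real) \<Rightarrow> real \<Rightarrow> real \<Rightarrow> real" where
  "Gfun \<mu> r x = 1 - deriv \<mu> x / r"

end

theory Submission
  imports Defs
begin

text \<open>
  Write s = \<sigma>^2/2 and h(x) = \<phi>(x)\<psi>(m) - \<psi>(x)\<phi>(m). Since \<psi> and \<phi> solve s u'' + \<mu> u' = r u,
  s \<partial>/\<partial>x D(x,m) = -r h - \<mu> D(x,m), and Abel's identity gives s \<partial>/\<partial>x D(x,x) = -\<mu> D(x,x);
  together, \<partial>/\<partial>x N(x,m) = -G D(x,m) - (\<mu>/s) N(x,m). For R = N/(G D) this yields the Riccati-type
  identity R' = -1 + R (\<mu>''/(r G) + r h/(s D)). On [m, \<eta>(m)] we have R \<ge> 0, \<mu>'' \<le> 0, G > 0,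
  D > 0 and, by monotonicity of \<psi> and \<phi>, h \<le> 0; hence R' \<le> -1, which is (ii).
  On the diagonal N(m,m) = D(m,m)(\<mu>/r - U), so the ratio in (i) is (\<mu>/r - U)/G, whose derivative
  (\<mu>'/r - U' + \<mu>''(\<mu>/r - U)/(r G))/G is negative below xbar because U' \<ge> 1 > \<mu>'/r.
  Positivity of D rests on \<psi>' > 0 > \<phi>': a zero of the derivative of a monotone solution would be
  an extremum of it, so u'' = 0 there and the equation would force r u = 0.
\<close>

definition ode_solution_at :: "(real \<Rightarrow> real) \<Rightarrow> (real \<Rightarrow> real) \<Rightarrow> real \<Rightarrow> (real \<Rightarrow> real) \<Rightarrow> real \<Rightarrow> bool" where
  "ode_solution_at \<mu> \<sigma> r f x \<longleftrightarrow> f differentiable (at x) \<and> deriv f differentiable (at x)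
     \<and> (\<sigma> x)\<^sup>2 * deriv (deriv f) x / 2 + \<mu> x * deriv f x - r * f x = 0"

lemma ode_solution_atD:
  assumes "ode_solution_at \<mu> \<sigma> r f t"
  shows "(f has_real_derivative deriv f t) (at t)"
    and "(deriv f has_real_derivative deriv (deriv f) t) (at t)"
    and "(\<sigma> t)\<^sup>2 * deriv (deriv f) t = 2 * (r * f t - \<mu> t * deriv f t)"
  using assms by (auto simp: ode_solution_at_def DERIV_deriv_iff_real_differentiable algebra_simps)

lemma ode_solution_at_second_deriv:
  assumes "ode_solution_at \<mu> \<sigma> r f t" "\<sigma> t \<noteq> 0"
  shows "deriv (deriv f) t = 2 * (r * f t - \<mu> t * deriv f t) / (\<sigma> t)\<^sup>2"
  using ode_solution_atD(3)[OF assms(1)] assms(2) by (simp add: field_simps)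

lemma ode_solution_deriv_nonzero:
  assumes "open S" "x \<in> S" "\<And>y. y \<in> S \<Longrightarrow> ode_solution_at \<mu> \<sigma> r f y" "r * f x \<noteq> 0"
    and sign: "(\<forall>y\<in>S. 0 \<le> deriv f y) \<or> (\<forall>y\<in>S. deriv f y \<le> 0)"
  shows "deriv f x \<noteq> 0"
proof
  assume crit: "deriv f x = 0"
  obtain d where "d > 0" and ball: "ball x d \<subseteq> S"
    using \<open>open S\<close> \<open>x \<in> S\<close> openE by blast
  have f'': "(deriv f has_real_derivative deriv (deriv f) x) (at x)"
    using ode_solution_atD(2) assms(2,3) by blast
  have "deriv (deriv f) x = 0"
    using sign
  proof
    assume "\<forall>y\<in>S. 0 \<le> deriv f y"
    then have "\<forall>y. \<bar>x - y\<bar> < d \<longrightarrow> deriv f x \<le> deriv f y"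
      using ball crit by (auto simp: dist_real_def)
    then show ?thesis using DERIV_local_min[OF f'' \<open>d > 0\<close>] by blast
  next
    assume "\<forall>y\<in>S. deriv f y \<le> 0"
    then have "\<forall>y. \<bar>x - y\<bar> < d \<longrightarrow> deriv f y \<le> deriv f x"
      using ball crit by (auto simp: dist_real_def)
    then show ?thesis using DERIV_local_max[OF f'' \<open>d > 0\<close>] by blast
  qed
  then show False
    using ode_solution_atD(3)[OF assms(3)[OF \<open>x \<in> S\<close>]] crit \<open>r * f x \<noteq> 0\<close> by simp
qed

lemma mono_on_ode_solution_deriv_pos:
  assumes "mono_on S f" "open S" "x \<in> S" "\<And>y. y \<in> S \<Longrightarrow> ode_solution_at \<mu> \<sigma> r f y" "r * f x \<noteq> 0"
  shows "deriv f x > 0"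
proof -
  have "0 \<le> deriv f y" if "y \<in> S" for y
    using mono_on_imp_deriv_nonneg[OF \<open>mono_on S f\<close> ode_solution_atD(1)[OF assms(4)[OF that]]]
      \<open>open S\<close> that by (simp add: interior_open)
  with ode_solution_deriv_nonzero[OF assms(2-5)] \<open>x \<in> S\<close> show ?thesis
    by (metis order_le_less)
qed

lemma antimono_on_ode_solution_deriv_neg:
  assumes "antimono_on S f" "open S" "x \<in> S" "\<And>y. y \<in> S \<Longrightarrow> ode_solution_at \<mu> \<sigma> r f y" "r * f x \<noteq> 0"
  shows "deriv f x < 0"
proof -
  have "mono_on S (\<lambda>y. - f y)"
    using \<open>antimono_on S f\<close> by (auto simp: monotone_on_def)
  then have "deriv f y \<le> 0" if "y \<in> S" for y
    using mono_on_imp_deriv_nonneg[OF _ DERIV_minus[OF ode_solution_atD(1)[OF assms(4)[OF that]]]]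
      \<open>open S\<close> that by (simp add: interior_open)
  with ode_solution_deriv_nonzero[OF assms(2-5)] \<open>x \<in> S\<close> show ?thesis
    by (metis order_le_less)
qed

lemma Dfun_has_derivative_fst:
  assumes "ode_solution_at \<mu> \<sigma> r \<psi> t" "ode_solution_at \<mu> \<sigma> r \<phi> t" "\<sigma> t \<noteq> 0"
  shows "((\<lambda>x. Dfun \<psi> \<phi> x m) has_real_derivative
           2 * (r * (\<psi> t * \<phi> m - \<phi> t * \<psi> m) - \<mu> t * Dfun \<psi> \<phi> t m) / (\<sigma> t)\<^sup>2) (at t)"
proof -
  have "deriv (deriv \<psi>) t * \<phi> m - deriv (deriv \<phi>) t * \<psi> m
        = 2 * (r * (\<psi> t * \<phi> m - \<phi> t * \<psi> m) - \<mu> t * Dfun \<psi> \<phi> t m) / (\<sigma> t)\<^sup>2"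
    using \<open>\<sigma> t \<noteq> 0\<close>
    by (simp add: ode_solution_at_second_deriv[OF assms(1,3)] ode_solution_at_second_deriv[OF assms(2,3)]
        Dfun_def field_simps)
  then show ?thesis
    unfolding Dfun_def
    by (auto intro!: derivative_eq_intros ode_solution_atD(2)[OF assms(1)] ode_solution_atD(2)[OF assms(2)])
qed

lemma Dfun_diag_has_derivative:
  assumes "ode_solution_at \<mu> \<sigma> r \<psi> t" "ode_solution_at \<mu> \<sigma> r \<phi> t" "\<sigma> t \<noteq> 0"
  shows "((\<lambda>x. Dfun \<psi> \<phi> x x) has_real_derivative - 2 * \<mu> t * Dfun \<psi> \<phi> t t / (\<sigma> t)\<^sup>2) (at t)"
proof -
  have "deriv (deriv \<psi>) t * \<phi> t - deriv (deriv \<phi>) t * \<psi> t = - 2 * \<mu> t * Dfun \<psi> \<phi> t t / (\<sigma> t)\<^sup>2"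
    using \<open>\<sigma> t \<noteq> 0\<close>
    by (simp add: ode_solution_at_second_deriv[OF assms(1,3)] ode_solution_at_second_deriv[OF assms(2,3)]
        Dfun_def field_simps)
  then show ?thesis
    unfolding Dfun_def
    by (auto intro!: derivative_eq_intros ode_solution_atD(1,2)[OF assms(1)]
        ode_solution_atD(1,2)[OF assms(2)] simp: algebra_simps)
qed

lemma Nfun_has_derivative_fst:
  assumes "ode_solution_at \<mu> \<sigma> r \<psi> t" "ode_solution_at \<mu> \<sigma> r \<phi> t" "\<sigma> t \<noteq> 0"
    and "\<mu> differentiable (at t)" "r \<noteq> 0"
  shows "((\<lambda>x. Nfun \<psi> \<phi> \<mu> r U x m) has_real_derivative
           - Gfun \<mu> r t * Dfun \<psi> \<phi> t m - 2 * \<mu> t * Nfun \<psi> \<phi> \<mu> r U t m / (\<sigma> t)\<^sup>2) (at t)"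
proof -
  have "(\<mu> has_real_derivative deriv \<mu> t) (at t)"
    using \<open>\<mu> differentiable (at t)\<close> by (simp add: DERIV_deriv_iff_real_differentiable)
  then show ?thesis
    unfolding Nfun_def using \<open>\<sigma> t \<noteq> 0\<close> \<open>r \<noteq> 0\<close>
    by (auto intro!: derivative_eq_intros ode_solution_atD(1)[OF assms(1)] ode_solution_atD(1)[OF assms(2)]
       Dfun_has_derivative_fst[OF assms(1-3)] Dfun_diag_has_derivative[OF assms(1-3)])
      (simp add: Gfun_def Dfun_def field_simps)
qed

lemma Gfun_has_derivative:
  assumes "deriv \<mu> differentiable (at t)"
  shows "(Gfun \<mu> r has_real_derivative - deriv (deriv \<mu>) t / r) (at t)"
  using DERIV_diff[OF DERIV_const DERIV_cdivide, of "deriv \<mu>" "deriv (deriv \<mu>) t" t UNIV 1 r] assms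
  unfolding Gfun_def by (simp add: DERIV_deriv_iff_real_differentiable)

lemma Nfun_ratio_has_derivative_fst:
  assumes "ode_solution_at \<mu> \<sigma> r \<psi> t" "ode_solution_at \<mu> \<sigma> r \<phi> t" "\<sigma> t \<noteq> 0"
    and "\<mu> differentiable (at t)" "deriv \<mu> differentiable (at t)" "r \<noteq> 0"
    and "Gfun \<mu> r t \<noteq> 0" "Dfun \<psi> \<phi> t m \<noteq> 0"
  shows "((\<lambda>x. Nfun \<psi> \<phi> \<mu> r U x m / (Gfun \<mu> r x * Dfun \<psi> \<phi> x m)) has_real_derivative
           - 1 + Nfun \<psi> \<phi> \<mu> r U t m / (Gfun \<mu> r t * Dfun \<psi> \<phi> t m)
             * (deriv (deriv \<mu>) t / (r * Gfun \<mu> r t)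
                + 2 * r * (\<phi> t * \<psi> m - \<psi> t * \<phi> m) / ((\<sigma> t)\<^sup>2 * Dfun \<psi> \<phi> t m))) (at t)"
  using assms(3,6-8)
  by (auto intro!: derivative_eq_intros Nfun_has_derivative_fst[OF assms(1-4,6)]
      Gfun_has_derivative[OF assms(5)] Dfun_has_derivative_fst[OF assms(1-3)])
    (simp add: field_simps power2_eq_square)

lemma Nfun_diag_ratio:
  assumes "Dfun \<psi> \<phi> x x \<noteq> 0"
  shows "Nfun \<psi> \<phi> \<mu> r U x x / (Gfun \<mu> r x * Dfun \<psi> \<phi> x x) = (\<mu> x / r - U x) / Gfun \<mu> r x"
proof -
  have "Nfun \<psi> \<phi> \<mu> r U x x = Dfun \<psi> \<phi> x x * (\<mu> x / r - U x)"
    by (simp add: Nfun_def algebra_simps)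
  with assms show ?thesis by simp
qed

lemma surplus_over_Gfun_decreasing:
  assumes "a < b" "0 < r"
    and mu_diff2: "\<And>x. x \<in> {a..b} \<Longrightarrow> \<mu> differentiable (at x) \<and> deriv \<mu> differentiable (at x)"
    and U_deriv: "\<And>x. x \<in> {a..b} \<Longrightarrow> (U has_real_derivative U' x) (at x)"
    and G_pos: "\<And>x. x \<in> {a..b} \<Longrightarrow> 0 < Gfun \<mu> r x"
    and deriv_U_ge: "\<And>x. x \<in> {a<..<b} \<Longrightarrow> 1 \<le> U' x"
    and surplus: "\<And>x. x \<in> {a<..<b} \<Longrightarrow> U x < \<mu> x / r"
    and mu_concave: "\<And>x. x \<in> {a<..<b} \<Longrightarrow> deriv (deriv \<mu>) x \<le> 0"
  shows "(\<mu> b / r - U b) / Gfun \<mu> r b < (\<mu> a / r - U a) / Gfun \<mu> r a"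
proof -
  let ?g = "\<lambda>x. (\<mu> x / r - U x) / Gfun \<mu> r x"
  let ?g' = "\<lambda>x. (deriv \<mu> x / r - U' x + ?g x * deriv (deriv \<mu>) x / r) / Gfun \<mu> r x"
  have deriv_g: "(?g has_real_derivative ?g' x) (at x)" if "x \<in> {a..b}" for x
  proof -
    have "((\<lambda>x. \<mu> x / r - U x) has_real_derivative deriv \<mu> x / r - U' x) (at x)"
      using mu_diff2[OF that] U_deriv[OF that]
      by (intro DERIV_diff DERIV_cdivide) (simp_all add: DERIV_deriv_iff_real_differentiable)
    from DERIV_divide[OF this Gfun_has_derivative[of \<mu> x r]] mu_diff2[OF that] G_pos[OF that]
    have "(?g has_real_derivative
            ((deriv \<mu> x / r - U' x) * Gfun \<mu> r x - (\<mu> x / r - U x) * (- deriv (deriv \<mu>) x / r))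
            / (Gfun \<mu> r x * Gfun \<mu> r x)) (at x)"
      by simp
    then show ?thesis
      by (rule DERIV_cong) (use G_pos[OF that] \<open>0 < r\<close> in \<open>simp add: field_simps\<close>)
  qed
  have deriv_g_neg: "?g' x < 0" if "x \<in> {a<..<b}" for x
  proof -
    have "deriv \<mu> x / r - U' x < 0"
      using G_pos[of x] deriv_U_ge[OF that] that by (simp add: Gfun_def)
    moreover have "?g x * deriv (deriv \<mu>) x / r \<le> 0"
      using G_pos[of x] surplus[OF that] mu_concave[OF that] that \<open>0 < r\<close>
      by (intro divide_nonpos_pos mult_nonneg_nonpos) auto
    ultimately show ?thesis
      using G_pos[of x] that by (intro divide_neg_pos) auto
  qed
  have "continuous_on {a..b} ?g"
    by (rule DERIV_atLeastAtMost_imp_continuous_on, rule exI, rule deriv_g) simp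
  then show ?thesis
  proof (rule DERIV_neg_imp_decreasing_open[OF \<open>a < b\<close>, rotated])
    fix x assume "a < x" "x < b"
    then have "x \<in> {a..b}" "x \<in> {a<..<b}" by auto
    with deriv_g deriv_g_neg show "\<exists>y. (?g has_real_derivative y) (at x) \<and> y < 0"
      by blast
  qed
qed

locale fundamental_solutions =
  fixes \<mu> \<sigma> :: "real \<Rightarrow> real" and r :: real and \<psi> \<phi> :: "real \<Rightarrow> real"
  assumes r_pos: "0 < r"
    and sigma_pos: "\<And>x. 0 < x \<Longrightarrow> 0 < \<sigma> x"
    and psi_pos: "\<And>x. 0 < x \<Longrightarrow> 0 < \<psi> x"
    and phi_pos: "\<And>x. 0 < x \<Longrightarrow> 0 < \<phi> x"
    and psi_ode: "\<And>x. 0 < x \<Longrightarrow> ode_solution_at \<mu> \<sigma> r \<psi> x"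
    and phi_ode: "\<And>x. 0 < x \<Longrightarrow> ode_solution_at \<mu> \<sigma> r \<phi> x"
    and psi_mono: "mono_on {0<..} \<psi>"
    and phi_antimono: "antimono_on {0<..} \<phi>"
begin

lemma Dfun_pos:
  assumes "0 < x" "0 < m"
  shows "0 < Dfun \<psi> \<phi> x m"
proof -
  have "0 < deriv \<psi> x"
    using psi_ode psi_pos[of x] r_pos \<open>0 < x\<close>
    by (intro mono_on_ode_solution_deriv_pos[OF psi_mono open_greaterThan]) auto
  moreover have "deriv \<phi> x < 0"
    using phi_ode phi_pos[of x] r_pos \<open>0 < x\<close>
    by (intro antimono_on_ode_solution_deriv_neg[OF phi_antimono open_greaterThan]) auto
  ultimately have "0 < deriv \<psi> x * \<phi> m" "deriv \<phi> x * \<psi> m < 0"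
    using psi_pos[of m] phi_pos[of m] \<open>0 < m\<close> by (simp_all add: mult_neg_pos)
  then show ?thesis
    unfolding Dfun_def by simp
qed

lemma phi_psi_cross_le:
  assumes "0 < m" "m \<le> t"
  shows "\<phi> t * \<psi> m \<le> \<psi> t * \<phi> m"
proof -
  have "\<psi> m \<le> \<psi> t" "\<phi> t \<le> \<phi> m"
    using psi_mono phi_antimono assms by (auto simp: monotone_on_def)
  then show ?thesis
    using psi_pos phi_pos assms by (metis mult.commute mult_mono less_imp_le order_less_le_trans)
qed

end

locale concave_drift = fundamental_solutions +
  assumes mu_diff2: "\<And>x. 0 < x \<Longrightarrow> \<mu> differentiable (at x) \<and> deriv \<mu> differentiable (at x)"
    and Gfun_pos: "\<And>x. 0 < x \<Longrightarrow> 0 < Gfun \<mu> r x"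
    and mu_concave: "\<And>x. 0 < x \<Longrightarrow> deriv (deriv \<mu>) x \<le> 0"
begin

lemma Nfun_diag_ratio_decreasing:
  assumes "0 < a" "a < b"
    and "\<And>x. x \<in> {a..b} \<Longrightarrow> (U has_real_derivative U' x) (at x)"
    and "\<And>x. x \<in> {a<..<b} \<Longrightarrow> 1 \<le> U' x \<and> U x < \<mu> x / r"
  shows "Nfun \<psi> \<phi> \<mu> r U b b / (Gfun \<mu> r b * Dfun \<psi> \<phi> b b)
       < Nfun \<psi> \<phi> \<mu> r U a a / (Gfun \<mu> r a * Dfun \<psi> \<phi> a a)"
proof -
  have "(\<mu> b / r - U b) / Gfun \<mu> r b < (\<mu> a / r - U a) / Gfun \<mu> r a"
    using assms mu_diff2 Gfun_pos mu_concave
    by (intro surplus_over_Gfun_decreasing[OF \<open>a < b\<close> r_pos]) auto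
  moreover have "Dfun \<psi> \<phi> a a \<noteq> 0" "Dfun \<psi> \<phi> b b \<noteq> 0"
    using Dfun_pos[of a a] Dfun_pos[of b b] assms(1,2) by auto
  ultimately show ?thesis
    by (simp add: Nfun_diag_ratio)
qed

lemma Nfun_ratio_decreasing:
  assumes "0 < m" "m \<le> x" "x < y" "y \<le> e"
    and N_zero: "Nfun \<psi> \<phi> \<mu> r U e m = 0"
    and N_pos: "\<And>t. m \<le> t \<Longrightarrow> t < e \<Longrightarrow> 0 < Nfun \<psi> \<phi> \<mu> r U t m"
  shows "Nfun \<psi> \<phi> \<mu> r U y m / (Gfun \<mu> r y * Dfun \<psi> \<phi> y m)
       < Nfun \<psi> \<phi> \<mu> r U x m / (Gfun \<mu> r x * Dfun \<psi> \<phi> x m)"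
proof (rule DERIV_neg_imp_decreasing[OF \<open>x < y\<close>])
  fix t assume "x \<le> t" "t \<le> y"
  with assms(1-4) have "0 < t" "m \<le> t" "t \<le> e" by auto
  let ?R = "Nfun \<psi> \<phi> \<mu> r U t m / (Gfun \<mu> r t * Dfun \<psi> \<phi> t m)"
  let ?c = "deriv (deriv \<mu>) t / (r * Gfun \<mu> r t)
            + 2 * r * (\<phi> t * \<psi> m - \<psi> t * \<phi> m) / ((\<sigma> t)\<^sup>2 * Dfun \<psi> \<phi> t m)"
  have "0 \<le> Nfun \<psi> \<phi> \<mu> r U t m"
    using N_zero N_pos[OF \<open>m \<le> t\<close>] \<open>t \<le> e\<close> by (cases "t = e") auto
  then have "0 \<le> ?R"
    using Gfun_pos[OF \<open>0 < t\<close>] Dfun_pos[OF \<open>0 < t\<close> \<open>0 < m\<close>] by simp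
  moreover have "?c \<le> 0"
    using mu_concave[OF \<open>0 < t\<close>] Gfun_pos[OF \<open>0 < t\<close>] Dfun_pos[OF \<open>0 < t\<close> \<open>0 < m\<close>]
      phi_psi_cross_le[OF \<open>0 < m\<close> \<open>m \<le> t\<close>] sigma_pos[OF \<open>0 < t\<close>] r_pos
    by (intro add_nonpos_nonpos divide_nonpos_pos) (auto intro: mult_nonneg_nonpos)
  ultimately have "- 1 + ?R * ?c < 0"
    using mult_nonneg_nonpos[of ?R ?c] by linarith
  moreover have "((\<lambda>x. Nfun \<psi> \<phi> \<mu> r U x m / (Gfun \<mu> r x * Dfun \<psi> \<phi> x m))
                   has_real_derivative - 1 + ?R * ?c) (at t)"
    using psi_ode[OF \<open>0 < t\<close>] phi_ode[OF \<open>0 < t\<close>] sigma_pos[OF \<open>0 < t\<close>] mu_diff2[OF \<open>0 < t\<close>]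
      Gfun_pos[OF \<open>0 < t\<close>] Dfun_pos[OF \<open>0 < t\<close> \<open>0 < m\<close>] r_pos
    by (intro Nfun_ratio_has_derivative_fst) auto
  ultimately show "\<exists>d. ((\<lambda>x. Nfun \<psi> \<phi> \<mu> r U x m / (Gfun \<mu> r x * Dfun \<psi> \<phi> x m))
                   has_real_derivative d) (at t) \<and> d < 0"
    by blast
qed

end

theorem lemma4:
  fixes \<alpha> :: ereal and \<mu> \<sigma> U U1 U2 \<psi> \<phi> \<eta> :: "real \<Rightarrow> real"
    and r ustar xbar :: real
  assumes alpha: "\<alpha> < 0"
    and mu_lip: "\<exists>L. L-lipschitz_on (state_space \<alpha>) \<mu>"
    and sigma_lip: "\<exists>L. L-lipschitz_on (state_space \<alpha>) \<sigma>"
    and sigma_pos: "\<forall>x\<in>state_space \<alpha>. \<sigma> x > 0"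
    and nat_l: "natural_left \<alpha> \<mu> \<sigma>"
    and nat_r: "natural_right \<mu> \<sigma>"
    and r_pos: "r > 0"
    and U_nonneg: "\<forall>x\<ge>0. U x \<ge> 0"
    \<comment> \<open>Assumption (a)\<close>
    and mu_diff: "\<forall>x\<in>state_space \<alpha>. \<mu> differentiable (at x)"
    and sigma_diff: "\<forall>x\<in>state_space \<alpha>. \<sigma> differentiable (at x)"
    and dmu_lip: "\<exists>C. C-lipschitz_on (state_space \<alpha>) (deriv \<mu>)"
    and dsigma_lip: "\<exists>C. C-lipschitz_on (state_space \<alpha>) (deriv \<sigma>)"
    and mu0: "\<mu> 0 > r * U 0"
    and dmu_sup: "\<exists>c<r. \<forall>x\<ge>0. deriv \<mu> x \<le> c"
    \<comment> \<open>Assumption (b)\<close>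
    and U_mono: "mono_on {0..} U"
    and U_concave: "concave_on {0..} U"
    and U_d1: "\<forall>x\<ge>0. (U has_real_derivative U1 x) (at x within {0..})"
    and U_d2: "\<forall>x\<ge>0. (U1 has_real_derivative U2 x) (at x within {0..})"
    and U2_cont: "continuous_on {0..} U2"
    and ustar: "ustar \<ge> 0"
    and U1_ge: "\<forall>x\<in>{0..ustar}. U1 x \<ge> 1"
    and U1_eq: "\<forall>x\<ge>ustar. U1 x = 1"
    and U_gen: "\<forall>x\<in>{0..<ustar}. \<mu> x * U1 x + (\<sigma> x)\<^sup>2 * U2 x / 2 - r * U x > 0"
    \<comment> \<open>Assumption (c)\<close>
    and mu_d2: "\<forall>x\<ge>0. deriv \<mu> differentiable (at x)"
    and mu_concave: "\<forall>x\<ge>0. deriv (deriv \<mu>) x \<le> 0"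
    \<comment> \<open>the point xbar\<close>
    and xbar_pos: "xbar > 0"
    and xbar_l: "\<forall>x\<in>{0..<xbar}. \<mu> x - r * U x > 0"
    and xbar_r: "\<forall>x>xbar. \<mu> x - r * U x < 0"
    \<comment> \<open>the fundamental solutions psi (increasing) and phi (decreasing)\<close>
    and psi_pos: "\<forall>x\<in>state_space \<alpha>. \<psi> x > 0"
    and psi_mono: "mono_on (state_space \<alpha>) \<psi>"
    and psi_ode: "\<forall>x\<in>state_space \<alpha>. \<psi> differentiable (at x) \<and> deriv \<psi> differentiable (at x)
        \<and> (\<sigma> x)\<^sup>2 * deriv (deriv \<psi>) x / 2 + \<mu> x * deriv \<psi> x - r * \<psi> x = 0"
    and phi_pos: "\<forall>x\<in>state_space \<alpha>. \<phi> x > 0"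
    and phi_mono: "antimono_on (state_space \<alpha>) \<phi>"
    and phi_ode: "\<forall>x\<in>state_space \<alpha>. \<phi> differentiable (at x) \<and> deriv \<phi> differentiable (at x)
        \<and> (\<sigma> x)\<^sup>2 * deriv (deriv \<phi>) x / 2 + \<mu> x * deriv \<phi> x - r * \<phi> x = 0"
    \<comment> \<open>the known properties of eta\<close>
    and eta: "\<forall>m\<in>{0..xbar}. m \<le> \<eta> m \<and> Nfun \<psi> \<phi> \<mu> r U (\<eta> m) m = 0
        \<and> (\<forall>x. 0 \<le> x \<and> x < \<eta> m \<longrightarrow> Nfun \<psi> \<phi> \<mu> r U x m > 0)
        \<and> (\<forall>x. \<eta> m < x \<longrightarrow> Nfun \<psi> \<phi> \<mu> r U x m < 0)"
  shows "(\<forall>a b. 0 < a \<and> a < b \<and> b \<le> xbar \<longrightarrow>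
            Nfun \<psi> \<phi> \<mu> r U b b / (Gfun \<mu> r b * Dfun \<psi> \<phi> b b)
          < Nfun \<psi> \<phi> \<mu> r U a a / (Gfun \<mu> r a * Dfun \<psi> \<phi> a a))
       \<and> (\<forall>m. 0 < m \<and> m \<le> xbar \<longrightarrow>
           (\<forall>x y. m \<le> x \<and> x < y \<and> y \<le> \<eta> m \<longrightarrow>
              Nfun \<psi> \<phi> \<mu> r U y m / (Gfun \<mu> r y * Dfun \<psi> \<phi> y m)
            < Nfun \<psi> \<phi> \<mu> r U x m / (Gfun \<mu> r x * Dfun \<psi> \<phi> x m)))"
proof -
  have in_space: "x \<in> state_space \<alpha>" if "0 < x" for x
    using alpha that unfolding state_space_def by (simp add: order.strict_trans zero_ereal_def)
  have "concave_drift \<mu> \<sigma> r \<psi> \<phi>"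
  proof
    show "mono_on {0<..} \<psi>" "antimono_on {0<..} \<phi>"
      using psi_mono phi_mono in_space by (auto intro: monotone_on_subset)
    show "0 < Gfun \<mu> r x" if "0 < x" for x
    proof -
      obtain c where "c < r" "\<forall>x\<ge>0. deriv \<mu> x \<le> c" using dmu_sup by blast
      then have "deriv \<mu> x < r" using that by (meson less_imp_le order_le_less_trans)
      then show ?thesis using r_pos by (simp add: Gfun_def)
    qed
  qed (use in_space r_pos sigma_pos psi_pos phi_pos psi_ode phi_ode mu_diff mu_d2 mu_concave
       in \<open>auto simp: ode_solution_at_def\<close>)
  then interpret concave_drift \<mu> \<sigma> r \<psi> \<phi> .
  have U_deriv: "(U has_real_derivative U1 x) (at x)" if "0 < x" for x
  proof -
    have "at x within {0..} = at x"
      using that by (intro at_within_interior) simp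
    then show ?thesis
      using U_d1 that by (metis less_imp_le)
  qed
  have U1_ge_1: "1 \<le> U1 x" if "0 \<le> x" for x
    using U1_ge U1_eq that by (cases "x \<le> ustar") auto
  show ?thesis
  proof (intro conjI allI impI; elim conjE)
    fix a b assume "0 < a" "a < b" "b \<le> xbar"
    then show "Nfun \<psi> \<phi> \<mu> r U b b / (Gfun \<mu> r b * Dfun \<psi> \<phi> b b)
             < Nfun \<psi> \<phi> \<mu> r U a a / (Gfun \<mu> r a * Dfun \<psi> \<phi> a a)"
      using U_deriv U1_ge_1 xbar_l r_pos
      by (intro Nfun_diag_ratio_decreasing[where U' = U1]) (auto simp: field_simps)
  next
    fix m x y assume "0 < m" "m \<le> xbar" "m \<le> x" "x < y" "y \<le> \<eta> m"
    then show "Nfun \<psi> \<phi> \<mu> r U y m / (Gfun \<mu> r y * Dfun \<psi> \<phi> y m)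
             < Nfun \<psi> \<phi> \<mu> r U x m / (Gfun \<mu> r x * Dfun \<psi> \<phi> x m)"
      using eta by (intro Nfun_ratio_decreasing[where e = "\<eta> m"]) auto
  qed
qed

end
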